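(* Let $\alpha,\beta,\gamma,\Delta\in\mathbb{C}$ with $(\Delta,\beta)\neq(0,0)$. Consider extensions of conformal $\widetilde{\mathrm{SV}}$-modules $$0\to V(\alpha,\beta,\Delta)\to E\to\mathbb{C}c_\gamma\to0,$$ realized as $E=\mathbb{C}[\partial]v_\Delta\oplus\mathbb{C}c_\gamma$ (as vector spaces) with $\mathbb{C}[\partial]v_\Delta\cong V(\alpha,\beta,\Delta)$ a submodule and $$L_\lambda c_\gamma=f(\partial,\lambda)v_\Delta,\ M_\lambda c_\gamma=g(\partial,\lambda)v_\Delta,\ Y_\lambda c_\gamma=h(\partial,\lambda)v_\Delta,\ N_\lambda c_\gamma=k(\partial,\lambda)v_\Delta,\ \partial c_\gamma=\gamma c_\gamma+a(\partial)v_\Delta,$$ where $f,g,h,k\in\mathbb{C}[\partial,\lambda]$, $a\in\mathbb{C}[\partial]$. Nontrivial extensions of this form exist if and only if $\alpha+\gamma=0$, $\beta=0$ and $\Delta=1$. In this case $\dim_{\mathbb{C}}\mathrm{Ext}(\mathbb{C}c_{-\alpha},V(\alpha,0,1))=1$, and the only (up to a scalar) nontrivial extension is given by $g=h=k=0$ and $f(\partial,\lambda)=a(\partial)=a_0\in\mathbb{C}^*$.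
   Context: A conformal module over a Lie conformal algebra $R$ is a $\mathbb{C}[\partial]$-module $V$ with $a\mapsto a_\lambda\in\mathrm{End}_{\mathbb{C}}(V)\otimes\mathbb{C}[\lambda]$ satisfying $[a_\lambda,b_\mu]=[a_\lambda b]_{\lambda+\mu}$ and $(\partial a)_\lambda=[\partial,a_\lambda]=-\lambda a_\lambda$. $\widetilde{\mathrm{SV}}$ is the Lie conformal algebra that is the free $\mathbb{C}[\partial]$-module with basis $L,M,Y,N$ whose nonzero $\lambda$-brackets (up to skew-symmetry) are $[L_\lambda L]=(\partial+2\lambda)L$, $[L_\lambda Y]=(\partial+\tfrac32\lambda)Y$, $[L_\lambda M]=(\partial+\lambda)M$, $[Y_\lambda Y]=(\partial+2\lambda)M$, $[L_\lambda N]=(\partial+\lambda)N$, $[N_\lambda M]=2M$, $[N_\lambda Y]=Y$. $V(\alpha,\beta,\Delta)=\mathbb{C}[\partial]v_\Delta$ with $L_\lambda v_\Delta=(\partial+\alpha+\Delta\lambda)v_\Delta$, $N_\lambda v_\Delta=\beta v_\Delta$, $M_\lambda v_\Delta=Y_\lambda v_\Delta=0$. $\mathbb{C}c_\gamma$ is the one-dimensional module with $\partial c_\gamma=\gamma c_\gamma$ and zero $\lambda$-actions. An extension of $W$ by $V$ is an exact sequence $0\to V\to E\to W\to0$ of conformal modules; equivalence via a module map of middle terms compatible with identities; trivial means equivalent to the direct sum. $\mathrm{Ext}(W,V)$ is the space of extension cocycles modulo coboundaries. *)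

theory Defs
  imports "HOL-Computational_Algebra.Polynomial"
begin

datatype gen = GL | GM | GY | GN

text \<open>Listed brackets [a_lambda b] = sum_c Q(a,b,c)(d,lambda) c, where d stands for the
  derivation of the algebra.  br0 a b c d l is the coefficient Q(a,b,c) evaluated at d, l.\<close>
fun br0 :: "gen \<Rightarrow> gen \<Rightarrow> gen \<Rightarrow> complex \<Rightarrow> complex \<Rightarrow> complex" where
  "br0 GL GL GL d l = d + 2 * l"
| "br0 GL GY GY d l = d + 3/2 * l"
| "br0 GL GM GM d l = d + l"
| "br0 GY GY GM d l = d + 2 * l"
| "br0 GL GN GN d l = d + l"
| "br0 GN GM GM d l = 2"
| "br0 GN GY GY d l = 1"
| "br0 _ _ _ d l = 0"

definition listed :: "gen \<Rightarrow> gen \<Rightarrow> bool" where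
  "listed a b \<longleftrightarrow> (a, b) \<in> {(GL,GL),(GL,GY),(GL,GM),(GY,GY),(GL,GN),(GN,GM),(GN,GY)}"

text \<open>All brackets, the unlisted ones obtained by skew-symmetry
  [b_lambda a] = - [a_(-lambda-d) b]; all other brackets are zero.\<close>
definition lc_br :: "gen \<Rightarrow> gen \<Rightarrow> gen \<Rightarrow> complex \<Rightarrow> complex \<Rightarrow> complex" where
  "lc_br a b c d l =
     (if listed a b then br0 a b c d l
      else if listed b a then - br0 b a c d (- l - d) else 0)"

section \<open>The underlying space E = C[d] v \<oplus> C c (pairs (p, z) meaning p(d) v + z c)\<close>

type_synonym E = "complex poly \<times> complex"

definition eadd :: "E \<Rightarrow> E \<Rightarrow> E" where "eadd u w = (fst u + fst w, snd u + snd w)"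
definition esub :: "E \<Rightarrow> E \<Rightarrow> E" where "esub u w = (fst u - fst w, snd u - snd w)"
definition esc :: "complex \<Rightarrow> E \<Rightarrow> E" where "esc c w = (smult c (fst w), c * snd w)"

text \<open>Conformal module over SV-tilde on E, with lambda evaluated at complex numbers
  (a polynomial identity in lambda, mu holds iff it holds for all complex values).
  (1) a_lambda w is polynomial in lambda;
  (2) [a_lambda, b_mu] = [a_lambda b]_(lambda+mu), where (d^n c)_(lambda+mu) = (-(lambda+mu))^n c_(lambda+mu);
  (3) [d, a_lambda] = - lambda a_lambda.\<close>
definition conformal_module :: "(E \<Rightarrow> E) \<Rightarrow> (gen \<Rightarrow> complex \<Rightarrow> E \<Rightarrow> E) \<Rightarrow> bool" where
  "conformal_module D act \<longleftrightarrow>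
     (\<forall>u w. D (eadd u w) = eadd (D u) (D w)) \<and> (\<forall>c w. D (esc c w) = esc c (D w)) \<and>
     (\<forall>a l u w. act a l (eadd u w) = eadd (act a l u) (act a l w)) \<and>
     (\<forall>a l c w. act a l (esc c w) = esc c (act a l w)) \<and>
     (\<forall>a w. \<exists>P Q. \<forall>l. act a l w = (poly P [:l:], poly Q l)) \<and>
     (\<forall>a b l m w. esub (act a l (act b m w)) (act b m (act a l w)) =
        eadd (esc (lc_br a b GL (-(l+m)) l) (act GL (l+m) w))
         (eadd (esc (lc_br a b GM (-(l+m)) l) (act GM (l+m) w))
          (eadd (esc (lc_br a b GY (-(l+m)) l) (act GY (l+m) w))
                (esc (lc_br a b GN (-(l+m)) l) (act GN (l+m) w))))) \<and>
     (\<forall>a l w. esub (D (act a l w)) (act a l (D w)) = esc (- l) (act a l w))"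

text \<open>Bivariate polynomials in C[d, lambda] are represented as complex poly poly:
  the outer variable is lambda, the coefficients are polynomials in d.
  Evaluation at lambda = l is  poly f [:l:]  (a polynomial in d).\<close>
record ext_data =
  dL :: "complex poly poly"
  dM :: "complex poly poly"
  dY :: "complex poly poly"
  dN :: "complex poly poly"
  dA :: "complex poly"

definition data_zero :: ext_data where
  "data_zero = \<lparr>dL = 0, dM = 0, dY = 0, dN = 0, dA = 0\<rparr>"

definition data_sub :: "ext_data \<Rightarrow> ext_data \<Rightarrow> ext_data" where
  "data_sub x y = \<lparr>dL = dL x - dL y, dM = dM x - dM y, dY = dY x - dY y,
                   dN = dN x - dN y, dA = dA x - dA y\<rparr>"

definition data_smult :: "complex \<Rightarrow> ext_data \<Rightarrow> ext_data" where
  "data_smult c x = \<lparr>dL = smult [:c:] (dL x), dM = smult [:c:] (dM x), dY = smult [:c:] (dY x),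
                     dN = smult [:c:] (dN x), dA = smult c (dA x)\<rparr>"

text \<open>Action of the generators on v_Delta in V(alpha,beta,Delta), as a polynomial in d.\<close>
fun vphi :: "complex \<Rightarrow> complex \<Rightarrow> complex \<Rightarrow> gen \<Rightarrow> complex \<Rightarrow> complex poly" where
  "vphi \<alpha> \<beta> \<Delta> GL l = [:\<alpha> + \<Delta> * l, 1:]"
| "vphi \<alpha> \<beta> \<Delta> GN l = [:\<beta>:]"
| "vphi \<alpha> \<beta> \<Delta> GM l = 0"
| "vphi \<alpha> \<beta> \<Delta> GY l = 0"

fun dcoef :: "ext_data \<Rightarrow> gen \<Rightarrow> complex poly poly" where
  "dcoef x GL = dL x" | "dcoef x GM = dM x" | "dcoef x GY = dY x" | "dcoef x GN = dN x"

definition ext_D :: "complex \<Rightarrow> ext_data \<Rightarrow> E \<Rightarrow> E" where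
  "ext_D \<gamma> x w = ([:0, 1:] * fst w + smult (snd w) (dA x), \<gamma> * snd w)"

definition ext_act :: "complex \<Rightarrow> complex \<Rightarrow> complex \<Rightarrow> ext_data \<Rightarrow> gen \<Rightarrow> complex \<Rightarrow> E \<Rightarrow> E" where
  "ext_act \<alpha> \<beta> \<Delta> x X l w =
     (pcompose (fst w) [:l, 1:] * vphi \<alpha> \<beta> \<Delta> X l + smult (snd w) (poly (dcoef x X) [:l:]), 0)"

definition is_cocycle :: "complex \<Rightarrow> complex \<Rightarrow> complex \<Rightarrow> complex \<Rightarrow> ext_data \<Rightarrow> bool" where
  "is_cocycle \<alpha> \<beta> \<Delta> \<gamma> x \<longleftrightarrow> conformal_module (ext_D \<gamma> x) (ext_act \<alpha> \<beta> \<Delta> x)"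

text \<open>Equivalence of extensions: a module map of the middle terms which is the identity
  on the submodule V and induces the identity on the quotient C c_gamma.\<close>
definition ext_equiv :: "complex \<Rightarrow> complex \<Rightarrow> complex \<Rightarrow> complex \<Rightarrow> ext_data \<Rightarrow> ext_data \<Rightarrow> bool" where
  "ext_equiv \<alpha> \<beta> \<Delta> \<gamma> x y \<longleftrightarrow>
     (\<exists>\<phi> :: E \<Rightarrow> E.
        (\<forall>u w. \<phi> (eadd u w) = eadd (\<phi> u) (\<phi> w)) \<and> (\<forall>c w. \<phi> (esc c w) = esc c (\<phi> w)) \<and>
        (\<forall>p. \<phi> (p, 0) = (p, 0)) \<and> (\<forall>w. snd (\<phi> w) = snd w) \<and>
        (\<forall>w. \<phi> (ext_D \<gamma> x w) = ext_D \<gamma> y (\<phi> w)) \<and>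
        (\<forall>X l w. \<phi> (ext_act \<alpha> \<beta> \<Delta> x X l w) = ext_act \<alpha> \<beta> \<Delta> y X l (\<phi> w)))"

definition is_trivial :: "complex \<Rightarrow> complex \<Rightarrow> complex \<Rightarrow> complex \<Rightarrow> ext_data \<Rightarrow> bool" where
  "is_trivial \<alpha> \<beta> \<Delta> \<gamma> x \<longleftrightarrow> ext_equiv \<alpha> \<beta> \<Delta> \<gamma> x data_zero"

definition is_coboundary :: "complex \<Rightarrow> complex \<Rightarrow> complex \<Rightarrow> complex \<Rightarrow> ext_data \<Rightarrow> bool" where
  "is_coboundary \<alpha> \<beta> \<Delta> \<gamma> x \<longleftrightarrow> is_cocycle \<alpha> \<beta> \<Delta> \<gamma> x \<and> is_trivial \<alpha> \<beta> \<Delta> \<gamma> x"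

text \<open>dim Ext = 1: the quotient (cocycles / coboundaries) is spanned by one non-zero class.\<close>
definition Ext_dim_one :: "complex \<Rightarrow> complex \<Rightarrow> complex \<Rightarrow> complex \<Rightarrow> bool" where
  "Ext_dim_one \<alpha> \<beta> \<Delta> \<gamma> \<longleftrightarrow>
     (\<exists>w. is_cocycle \<alpha> \<beta> \<Delta> \<gamma> w \<and> \<not> is_coboundary \<alpha> \<beta> \<Delta> \<gamma> w \<and>
        (\<forall>x. is_cocycle \<alpha> \<beta> \<Delta> \<gamma> x \<longrightarrow>
             (\<exists>c. is_coboundary \<alpha> \<beta> \<Delta> \<gamma> (data_sub x (data_smult c w)))))"

definition std_data :: "complex \<Rightarrow> ext_data" where
  "std_data a0 = \<lparr>dL = [:[:a0:]:], dM = 0, dY = 0, dN = 0, dA = [:a0:]\<rparr>"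

end

theory Submission
  imports Defs
begin

text \<open>The axiom \<open>[\<partial>, X\<^sub>\<lambda>] = -\<lambda> X\<^sub>\<lambda>\<close> applied to \<open>c\<close> reads
  \<open>(\<partial> + \<lambda> - \<gamma>) F\<^sub>X(\<partial>, \<lambda>) = a(\<partial> + \<lambda>) X\<^sub>\<lambda> v\<close>, where \<open>F\<^sub>X\<close> is the coefficient
  \<open>f, g, h\<close> or \<open>k\<close> of \<open>X\<close>. At \<open>\<partial> = \<gamma> - \<lambda>\<close> the left-hand side vanishes, so
  \<open>a(\<gamma>) \<noteq> 0\<close> forces the symbols of \<open>L\<^sub>\<lambda> v\<close> and \<open>N\<^sub>\<lambda> v\<close> to vanish there, i.e.
  \<open>\<alpha> + \<gamma> = 0\<close>, \<open>\<beta> = 0\<close>, \<open>\<Delta> = 1\<close>. If \<open>a(\<gamma>) = 0\<close>, write \<open>a = (\<partial> - \<gamma>) q\<close>;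
  cancelling \<open>\<partial> + \<lambda> - \<gamma>\<close> gives \<open>F\<^sub>X = X\<^sub>\<lambda> (q v)\<close>, and \<open>c \<mapsto> c + q v\<close> splits the
  extension. Conversely a splitting \<open>c \<mapsto> c + q v\<close> forces \<open>a = (\<partial> - \<gamma>) q\<close>. So the class
  of a cocycle is the linear invariant \<open>a(\<gamma>)\<close>, which the cocycle \<open>f = a = a\<^sub>0\<close> realises.\<close>

definition vact :: "complex \<Rightarrow> complex \<Rightarrow> complex \<Rightarrow> gen \<Rightarrow> complex \<Rightarrow> complex poly \<Rightarrow> complex poly"
  where "vact \<alpha> \<beta> \<Delta> X l p = pcompose p [:l, 1:] * vphi \<alpha> \<beta> \<Delta> X l"

definition ext_coef :: "ext_data \<Rightarrow> gen \<Rightarrow> complex \<Rightarrow> complex poly"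
  where "ext_coef x X l = poly (dcoef x X) [:l:]"

lemma ext_act_eq:
  "ext_act \<alpha> \<beta> \<Delta> x X l w = (vact \<alpha> \<beta> \<Delta> X l (fst w) + smult (snd w) (ext_coef x X l), 0)"
  by (simp add: ext_act_def vact_def ext_coef_def)

lemma vact_0 [simp]: "vact \<alpha> \<beta> \<Delta> X l 0 = 0"
  by (simp add: vact_def)

lemma vact_add: "vact \<alpha> \<beta> \<Delta> X l (p + q) = vact \<alpha> \<beta> \<Delta> X l p + vact \<alpha> \<beta> \<Delta> X l q"
  by (simp add: vact_def pcompose_add distrib_right)

lemma vact_diff: "vact \<alpha> \<beta> \<Delta> X l (p - q) = vact \<alpha> \<beta> \<Delta> X l p - vact \<alpha> \<beta> \<Delta> X l q"
  by (simp add: vact_def pcompose_diff left_diff_distrib)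

lemma vact_smult: "vact \<alpha> \<beta> \<Delta> X l (smult c p) = smult c (vact \<alpha> \<beta> \<Delta> X l p)"
  by (simp add: vact_def pcompose_smult)

lemma vact_mult: "vact \<alpha> \<beta> \<Delta> X l (q * p) = pcompose q [:l, 1:] * vact \<alpha> \<beta> \<Delta> X l p"
  by (simp add: vact_def pcompose_mult)

text \<open>The right-hand side [a_\<lambda> b]_(\<lambda>+\<mu>) of the commutator axiom, given the values F c of the
  operators c_(\<lambda>+\<mu>) on a fixed vector.\<close>
definition bracket_rhs :: "gen \<Rightarrow> gen \<Rightarrow> complex \<Rightarrow> complex \<Rightarrow> (gen \<Rightarrow> complex poly) \<Rightarrow> complex poly"
  where "bracket_rhs a b l m F =
     smult (lc_br a b GL (-(l+m)) l) (F GL) + (smult (lc_br a b GM (-(l+m)) l) (F GM) +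
     (smult (lc_br a b GY (-(l+m)) l) (F GY) + smult (lc_br a b GN (-(l+m)) l) (F GN)))"

lemma bracket_rhs_add:
  "bracket_rhs a b l m (\<lambda>c. F c + G c) = bracket_rhs a b l m F + bracket_rhs a b l m G"
  by (simp add: bracket_rhs_def smult_add_right algebra_simps)

lemma bracket_rhs_diff:
  "bracket_rhs a b l m (\<lambda>c. F c - G c) = bracket_rhs a b l m F - bracket_rhs a b l m G"
  by (simp add: bracket_rhs_def smult_diff_right algebra_simps)

lemma bracket_rhs_smult:
  "bracket_rhs a b l m (\<lambda>c. smult k (F c)) = smult k (bracket_rhs a b l m F)"
  by (simp add: bracket_rhs_def smult_add_right mult.commute)

lemma vact_commutator:
  "vact \<alpha> \<beta> \<Delta> a l (vact \<alpha> \<beta> \<Delta> b m p) - vact \<alpha> \<beta> \<Delta> b m (vact \<alpha> \<beta> \<Delta> a l p)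
     = bracket_rhs a b l m (\<lambda>c. vact \<alpha> \<beta> \<Delta> c (l+m) p)"
  by (rule poly_ext, cases a; cases b)
     (simp_all add: vact_def bracket_rhs_def lc_br_def listed_def poly_pcompose algebra_simps)

text \<open>The components along \<open>\<complex>[\<partial>] v\<close> of the two module axioms applied to \<open>c\<close>.\<close>
definition bracket_cond :: "complex \<Rightarrow> complex \<Rightarrow> complex \<Rightarrow> ext_data \<Rightarrow> bool"
  where "bracket_cond \<alpha> \<beta> \<Delta> x \<longleftrightarrow> (\<forall>a b l m.
     vact \<alpha> \<beta> \<Delta> a l (ext_coef x b m) - vact \<alpha> \<beta> \<Delta> b m (ext_coef x a l)
       = bracket_rhs a b l m (\<lambda>c. ext_coef x c (l+m)))"

definition deriv_cond :: "complex \<Rightarrow> complex \<Rightarrow> complex \<Rightarrow> complex \<Rightarrow> ext_data \<Rightarrow> bool"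
  where "deriv_cond \<alpha> \<beta> \<Delta> \<gamma> x \<longleftrightarrow>
     (\<forall>X l. [:l - \<gamma>, 1:] * ext_coef x X l = vact \<alpha> \<beta> \<Delta> X l (dA x))"

lemma cocycle_imp_conds:
  assumes "is_cocycle \<alpha> \<beta> \<Delta> \<gamma> x"
  shows "bracket_cond \<alpha> \<beta> \<Delta> x" and "deriv_cond \<alpha> \<beta> \<Delta> \<gamma> x"
proof -
  let ?c = "(0, 1) :: E"
  from assms have
    comm: "\<And>a b l m. esub (ext_act \<alpha> \<beta> \<Delta> x a l (ext_act \<alpha> \<beta> \<Delta> x b m ?c))
                            (ext_act \<alpha> \<beta> \<Delta> x b m (ext_act \<alpha> \<beta> \<Delta> x a l ?c)) =
        eadd (esc (lc_br a b GL (-(l+m)) l) (ext_act \<alpha> \<beta> \<Delta> x GL (l+m) ?c))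
         (eadd (esc (lc_br a b GM (-(l+m)) l) (ext_act \<alpha> \<beta> \<Delta> x GM (l+m) ?c))
          (eadd (esc (lc_br a b GY (-(l+m)) l) (ext_act \<alpha> \<beta> \<Delta> x GY (l+m) ?c))
                (esc (lc_br a b GN (-(l+m)) l) (ext_act \<alpha> \<beta> \<Delta> x GN (l+m) ?c))))"
    and deriv: "\<And>X l. esub (ext_D \<gamma> x (ext_act \<alpha> \<beta> \<Delta> x X l ?c))
                             (ext_act \<alpha> \<beta> \<Delta> x X l (ext_D \<gamma> x ?c))
                       = esc (- l) (ext_act \<alpha> \<beta> \<Delta> x X l ?c)"
    unfolding is_cocycle_def conformal_module_def by blast+
  show "bracket_cond \<alpha> \<beta> \<Delta> x"
    unfolding bracket_cond_def
    using arg_cong[OF comm, of fst]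
    by (simp add: ext_act_eq esub_def eadd_def esc_def bracket_rhs_def)
  show "deriv_cond \<alpha> \<beta> \<Delta> \<gamma> x"
    unfolding deriv_cond_def
  proof (intro allI)
    fix X l
    have "[:0, 1:] * ext_coef x X l - (vact \<alpha> \<beta> \<Delta> X l (dA x) + smult \<gamma> (ext_coef x X l))
          = smult (- l) (ext_coef x X l)"
      using arg_cong[OF deriv[of X l], of fst]
      by (simp add: ext_act_eq esub_def esc_def ext_D_def)
    then show "[:l - \<gamma>, 1:] * ext_coef x X l = vact \<alpha> \<beta> \<Delta> X l (dA x)"
      by (simp add: poly_eq_iff algebra_simps)
  qed
qed

text \<open>\<open>p(\<partial> + \<lambda>)\<close> as an element of \<open>\<complex>[\<partial>][\<lambda>]\<close>.\<close>
definition shift_bivariate :: "complex poly \<Rightarrow> complex poly poly"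
  where "shift_bivariate p = pcompose (map_poly (\<lambda>c. [:c:]) p) [:[:0, 1:], 1:]"

lemma poly_shift_bivariate: "poly (shift_bivariate p) [:l:] = pcompose p [:l, 1:]"
proof -
  have "poly (shift_bivariate p) [:l:] = poly (map_poly (\<lambda>c. [:c:]) p) [:l, 1:]"
    by (simp add: shift_bivariate_def poly_pcompose)
  then show ?thesis by (simp add: pcompose_altdef)
qed

fun vphi_bivariate :: "complex \<Rightarrow> complex \<Rightarrow> complex \<Rightarrow> gen \<Rightarrow> complex poly poly" where
  "vphi_bivariate \<alpha> \<beta> \<Delta> GL = [:[:\<alpha>, 1:], [:\<Delta>:]:]"
| "vphi_bivariate \<alpha> \<beta> \<Delta> GN = [:[:\<beta>:]:]"
| "vphi_bivariate \<alpha> \<beta> \<Delta> GM = 0"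
| "vphi_bivariate \<alpha> \<beta> \<Delta> GY = 0"

lemma poly_vphi_bivariate: "poly (vphi_bivariate \<alpha> \<beta> \<Delta> X) [:l:] = vphi \<alpha> \<beta> \<Delta> X l"
  by (cases X) (simp_all add: mult.commute)

lemma ext_act_polynomial:
  "\<exists>P Q. \<forall>l. ext_act \<alpha> \<beta> \<Delta> x X l w = (poly P [:l:], poly Q l)"
proof (intro exI allI)
  fix l
  show "ext_act \<alpha> \<beta> \<Delta> x X l w =
      (poly (shift_bivariate (fst w) * vphi_bivariate \<alpha> \<beta> \<Delta> X + smult [:snd w:] (dcoef x X)) [:l:],
       poly 0 l)"
    by (simp add: ext_act_eq vact_def ext_coef_def poly_shift_bivariate poly_vphi_bivariate)
qed

lemma bracket_cond_commutator:
  assumes "bracket_cond \<alpha> \<beta> \<Delta> x"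
  shows "vact \<alpha> \<beta> \<Delta> a l (vact \<alpha> \<beta> \<Delta> b m p + smult z (ext_coef x b m))
      - vact \<alpha> \<beta> \<Delta> b m (vact \<alpha> \<beta> \<Delta> a l p + smult z (ext_coef x a l))
      = bracket_rhs a b l m (\<lambda>c. vact \<alpha> \<beta> \<Delta> c (l+m) p + smult z (ext_coef x c (l+m)))"
proof -
  have on_c: "vact \<alpha> \<beta> \<Delta> a l (ext_coef x b m) - vact \<alpha> \<beta> \<Delta> b m (ext_coef x a l) =
      bracket_rhs a b l m (\<lambda>c. ext_coef x c (l+m))"
    using assms unfolding bracket_cond_def by blast
  have "vact \<alpha> \<beta> \<Delta> a l (vact \<alpha> \<beta> \<Delta> b m p + smult z (ext_coef x b m))
      - vact \<alpha> \<beta> \<Delta> b m (vact \<alpha> \<beta> \<Delta> a l p + smult z (ext_coef x a l))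
      = (vact \<alpha> \<beta> \<Delta> a l (vact \<alpha> \<beta> \<Delta> b m p) - vact \<alpha> \<beta> \<Delta> b m (vact \<alpha> \<beta> \<Delta> a l p))
        + smult z (vact \<alpha> \<beta> \<Delta> a l (ext_coef x b m) - vact \<alpha> \<beta> \<Delta> b m (ext_coef x a l))"
    by (simp add: vact_add vact_smult smult_diff_right)
  also have "\<dots> = bracket_rhs a b l m (\<lambda>c. vact \<alpha> \<beta> \<Delta> c (l+m) p)
      + smult z (bracket_rhs a b l m (\<lambda>c. ext_coef x c (l+m)))"
    unfolding vact_commutator on_c ..
  also have "\<dots> = bracket_rhs a b l m (\<lambda>c. vact \<alpha> \<beta> \<Delta> c (l+m) p + smult z (ext_coef x c (l+m)))"
    by (simp only: bracket_rhs_add bracket_rhs_smult)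
  finally show ?thesis .
qed

lemma deriv_cond_act_D:
  assumes "deriv_cond \<alpha> \<beta> \<Delta> \<gamma> x"
  shows "vact \<alpha> \<beta> \<Delta> X l ([:0, 1:] * p + smult z (dA x))
      = [:l, 1:] * vact \<alpha> \<beta> \<Delta> X l p + smult z ([:l - \<gamma>, 1:] * ext_coef x X l)"
proof -
  have "vact \<alpha> \<beta> \<Delta> X l ([:0, 1:] * p) = [:l, 1:] * vact \<alpha> \<beta> \<Delta> X l p"
    unfolding vact_mult by (simp add: pcompose_pCons)
  moreover have "vact \<alpha> \<beta> \<Delta> X l (dA x) = [:l - \<gamma>, 1:] * ext_coef x X l"
    using assms unfolding deriv_cond_def by simp
  ultimately show ?thesis by (simp only: vact_add vact_smult)
qed

lemma conds_imp_cocycle: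
  assumes bracket: "bracket_cond \<alpha> \<beta> \<Delta> x" and deriv: "deriv_cond \<alpha> \<beta> \<Delta> \<gamma> x"
  shows "is_cocycle \<alpha> \<beta> \<Delta> \<gamma> x"
  unfolding is_cocycle_def conformal_module_def
proof (intro conjI allI)
  fix a b l m and w :: E
  show "esub (ext_act \<alpha> \<beta> \<Delta> x a l (ext_act \<alpha> \<beta> \<Delta> x b m w)) (ext_act \<alpha> \<beta> \<Delta> x b m (ext_act \<alpha> \<beta> \<Delta> x a l w)) =
        eadd (esc (lc_br a b GL (-(l+m)) l) (ext_act \<alpha> \<beta> \<Delta> x GL (l+m) w))
         (eadd (esc (lc_br a b GM (-(l+m)) l) (ext_act \<alpha> \<beta> \<Delta> x GM (l+m) w))
          (eadd (esc (lc_br a b GY (-(l+m)) l) (ext_act \<alpha> \<beta> \<Delta> x GY (l+m) w))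
                (esc (lc_br a b GN (-(l+m)) l) (ext_act \<alpha> \<beta> \<Delta> x GN (l+m) w))))"
    using bracket_cond_commutator[OF bracket, of a l b m "fst w" "snd w"]
    by (simp add: ext_act_eq esub_def eadd_def esc_def bracket_rhs_def)
next
  fix a l and w :: E
  show "esub (ext_D \<gamma> x (ext_act \<alpha> \<beta> \<Delta> x a l w)) (ext_act \<alpha> \<beta> \<Delta> x a l (ext_D \<gamma> x w))
      = esc (- l) (ext_act \<alpha> \<beta> \<Delta> x a l w)"
    using deriv_cond_act_D[OF deriv, of a l "fst w" "snd w"]
    by (simp add: ext_act_eq esub_def esc_def ext_D_def) (rule poly_ext, simp add: algebra_simps)
next
  fix a w
  show "\<exists>P Q. \<forall>l. ext_act \<alpha> \<beta> \<Delta> x a l w = (poly P [:l:], poly Q l)"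
    by (rule ext_act_polynomial)
qed (simp_all add: ext_D_def ext_act_eq eadd_def esc_def vact_add vact_smult
      smult_add_left smult_add_right distrib_left)

lemma is_cocycle_iff: "is_cocycle \<alpha> \<beta> \<Delta> \<gamma> x \<longleftrightarrow> bracket_cond \<alpha> \<beta> \<Delta> x \<and> deriv_cond \<alpha> \<beta> \<Delta> \<gamma> x"
  using cocycle_imp_conds conds_imp_cocycle by blast

lemma ext_coef_diff_smult:
  "ext_coef (data_sub x (data_smult k y)) X l = ext_coef x X l - smult k (ext_coef y X l)"
  by (cases X) (simp_all add: ext_coef_def data_sub_def data_smult_def)

lemma dA_diff_smult: "dA (data_sub x (data_smult k y)) = dA x - smult k (dA y)"
  by (simp add: data_sub_def data_smult_def)

lemma cocycle_diff_smult:
  assumes "is_cocycle \<alpha> \<beta> \<Delta> \<gamma> x" and "is_cocycle \<alpha> \<beta> \<Delta> \<gamma> y"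
  shows "is_cocycle \<alpha> \<beta> \<Delta> \<gamma> (data_sub x (data_smult k y))"
  unfolding is_cocycle_iff
proof
  show "bracket_cond \<alpha> \<beta> \<Delta> (data_sub x (data_smult k y))"
    unfolding bracket_cond_def
  proof (intro allI)
    fix a b l m
    have bracket_z: "vact \<alpha> \<beta> \<Delta> a l (ext_coef z b m) - vact \<alpha> \<beta> \<Delta> b m (ext_coef z a l) =
        bracket_rhs a b l m (\<lambda>c. ext_coef z c (l+m))" if "z \<in> {x, y}" for z
      using that assms unfolding is_cocycle_iff bracket_cond_def by blast
    show "vact \<alpha> \<beta> \<Delta> a l (ext_coef (data_sub x (data_smult k y)) b m)
        - vact \<alpha> \<beta> \<Delta> b m (ext_coef (data_sub x (data_smult k y)) a l)
        = bracket_rhs a b l m (\<lambda>c. ext_coef (data_sub x (data_smult k y)) c (l+m))"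
      by (simp add: ext_coef_diff_smult vact_diff vact_smult bracket_rhs_diff bracket_rhs_smult
          flip: bracket_z) (simp add: smult_diff_right algebra_simps)
  qed
  show "deriv_cond \<alpha> \<beta> \<Delta> \<gamma> (data_sub x (data_smult k y))"
    using assms
    by (simp add: is_cocycle_iff deriv_cond_def ext_coef_diff_smult dA_diff_smult vact_diff vact_smult
        right_diff_distrib)
qed

lemma ext_coef_data_zero [simp]: "ext_coef data_zero X l = 0"
  by (cases X) (simp_all add: ext_coef_def data_zero_def)

lemma is_trivial_by_shift:
  assumes a: "dA x = [:-\<gamma>, 1:] * q" and coef: "\<And>X l. ext_coef x X l = vact \<alpha> \<beta> \<Delta> X l q"
  shows "is_trivial \<alpha> \<beta> \<Delta> \<gamma> x"
  unfolding is_trivial_def ext_equiv_def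
proof (rule exI[of _ "\<lambda>w. (fst w + smult (snd w) q, snd w)"], intro conjI allI)
  fix w :: E
  show "(fst (ext_D \<gamma> x w) + smult (snd (ext_D \<gamma> x w)) q, snd (ext_D \<gamma> x w)) =
      ext_D \<gamma> data_zero (fst w + smult (snd w) q, snd w)"
    by (simp add: ext_D_def data_zero_def a) (rule poly_ext, simp add: algebra_simps)
qed (simp_all add: eadd_def esc_def ext_act_eq coef vact_add vact_smult smult_add_left smult_add_right)

lemma trivial_imp_root:
  assumes "is_trivial \<alpha> \<beta> \<Delta> \<gamma> x"
  shows "poly (dA x) \<gamma> = 0"
proof -
  obtain \<phi> :: "E \<Rightarrow> E" where add: "\<And>u w. \<phi> (eadd u w) = eadd (\<phi> u) (\<phi> w)"
    and sc: "\<And>c w. \<phi> (esc c w) = esc c (\<phi> w)" and on_v: "\<And>p. \<phi> (p, 0) = (p, 0)"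
    and on_c: "\<And>w. snd (\<phi> w) = snd w"
    and deriv: "\<And>w. \<phi> (ext_D \<gamma> x w) = ext_D \<gamma> data_zero (\<phi> w)"
    using assms unfolding is_trivial_def ext_equiv_def by blast
  define q where "q = fst (\<phi> (0, 1))"
  have c: "\<phi> (0, 1) = (q, 1)"
    using on_c[of "(0, 1)"] unfolding q_def by (simp add: prod_eq_iff)
  have "\<phi> (dA x, \<gamma>) = \<phi> (eadd (dA x, 0) (esc \<gamma> (0, 1)))"
    by (simp add: eadd_def esc_def)
  also have "\<dots> = (dA x + smult \<gamma> q, \<gamma>)"
    by (simp only: add sc on_v c) (simp add: eadd_def esc_def)
  finally have "\<phi> (dA x, \<gamma>) = (dA x + smult \<gamma> q, \<gamma>)" .
  moreover have "\<phi> (dA x, \<gamma>) = ext_D \<gamma> data_zero (q, 1)"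
    using deriv[of "(0, 1)"] c by (simp add: ext_D_def)
  ultimately have "dA x = [:- \<gamma>, 1:] * q"
    by (simp add: ext_D_def data_zero_def)
  then show ?thesis by simp
qed

lemma trivial_if_root:
  assumes deriv: "deriv_cond \<alpha> \<beta> \<Delta> \<gamma> x" and root: "poly (dA x) \<gamma> = 0"
  shows "is_trivial \<alpha> \<beta> \<Delta> \<gamma> x"
proof -
  from root obtain q where a: "dA x = [:-\<gamma>, 1:] * q"
    unfolding poly_eq_0_iff_dvd dvd_def by blast
  show ?thesis
  proof (rule is_trivial_by_shift[OF a])
    fix X l
    have "[:l - \<gamma>, 1:] * ext_coef x X l = vact \<alpha> \<beta> \<Delta> X l (dA x)"
      using deriv unfolding deriv_cond_def by blast
    also have "\<dots> = [:l - \<gamma>, 1:] * vact \<alpha> \<beta> \<Delta> X l q"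
      unfolding a vact_mult by (simp add: pcompose_pCons)
    finally show "ext_coef x X l = vact \<alpha> \<beta> \<Delta> X l q"
      by (metis mult_left_cancel pCons_eq_0_iff one_neq_zero)
  qed
qed

lemma cocycle_trivial_iff_root:
  assumes "is_cocycle \<alpha> \<beta> \<Delta> \<gamma> x"
  shows "is_trivial \<alpha> \<beta> \<Delta> \<gamma> x \<longleftrightarrow> poly (dA x) \<gamma> = 0"
  using assms trivial_imp_root trivial_if_root is_cocycle_iff by blast

lemma nonroot_imp_params:
  assumes deriv: "deriv_cond \<alpha> \<beta> \<Delta> \<gamma> x" and nonroot: "poly (dA x) \<gamma> \<noteq> 0"
  shows "\<alpha> + \<gamma> = 0 \<and> \<beta> = 0 \<and> \<Delta> = 1"
proof -
  have vanish: "poly (dA x) \<gamma> * poly (vphi \<alpha> \<beta> \<Delta> X l) (\<gamma> - l) = 0" for X l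
  proof -
    have "poly ([:l - \<gamma>, 1:] * ext_coef x X l) (\<gamma> - l) = poly (vact \<alpha> \<beta> \<Delta> X l (dA x)) (\<gamma> - l)"
      using deriv unfolding deriv_cond_def by metis
    then show ?thesis by (simp add: vact_def poly_pcompose algebra_simps)
  qed
  have "\<alpha> + \<gamma> = 0" using vanish[of GL 0] nonroot by simp
  moreover have "\<alpha> + \<Delta> + (\<gamma> - 1) = 0" using vanish[of GL 1] nonroot by simp
  moreover have "\<beta> = 0" using vanish[of GN 0] nonroot by simp
  ultimately show ?thesis by algebra
qed

lemma std_data_cocycle:
  assumes "\<alpha> + \<gamma> = 0"
  shows "is_cocycle \<alpha> 0 1 \<gamma> (std_data a0)"
proof -
  have \<gamma>: "\<gamma> = - \<alpha>" using assms by algebra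
  show ?thesis
    unfolding is_cocycle_iff bracket_cond_def deriv_cond_def \<gamma>
  proof (intro conjI allI)
    fix a b l m
    show "vact \<alpha> 0 1 a l (ext_coef (std_data a0) b m) - vact \<alpha> 0 1 b m (ext_coef (std_data a0) a l)
        = bracket_rhs a b l m (\<lambda>c. ext_coef (std_data a0) c (l+m))"
      by (rule poly_ext, cases a; cases b)
         (simp_all add: ext_coef_def std_data_def vact_def bracket_rhs_def lc_br_def listed_def
          poly_pcompose algebra_simps)
  next
    fix X l
    show "[:l - - \<alpha>, 1:] * ext_coef (std_data a0) X l = vact \<alpha> 0 1 X l (dA (std_data a0))"
      by (rule poly_ext, cases X)
         (simp_all add: ext_coef_def std_data_def vact_def poly_pcompose algebra_simps)
  qed
qed

lemma std_data_nontrivial: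
  assumes "a0 \<noteq> 0"
  shows "\<not> is_trivial \<alpha> \<beta> \<Delta> \<gamma> (std_data a0)"
  using trivial_imp_root assms by (force simp: std_data_def)

lemma data_smult_std_data: "data_smult c (std_data a) = std_data (c * a)"
  by (simp add: data_smult_def std_data_def)

lemma cocycle_diff_std_data_coboundary:
  assumes "is_cocycle \<alpha> 0 1 (- \<alpha>) x"
  shows "is_coboundary \<alpha> 0 1 (- \<alpha>) (data_sub x (std_data (poly (dA x) (- \<alpha>))))"
    (is "is_coboundary _ _ _ _ ?y")
proof -
  have "?y = data_sub x (data_smult (poly (dA x) (- \<alpha>)) (std_data 1))"
    by (simp add: data_smult_std_data)
  then have "is_cocycle \<alpha> 0 1 (- \<alpha>) ?y"
    using cocycle_diff_smult[OF assms std_data_cocycle] by simp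
  moreover have "poly (dA ?y) (- \<alpha>) = 0"
    by (simp add: data_sub_def std_data_def)
  ultimately show ?thesis
    unfolding is_coboundary_def using trivial_if_root is_cocycle_iff by blast
qed

lemma nontrivial_cocycle_exists_iff:
  "(\<exists>x. is_cocycle \<alpha> \<beta> \<Delta> \<gamma> x \<and> \<not> is_trivial \<alpha> \<beta> \<Delta> \<gamma> x) \<longleftrightarrow> (\<alpha> + \<gamma> = 0 \<and> \<beta> = 0 \<and> \<Delta> = 1)"
proof
  assume "\<exists>x. is_cocycle \<alpha> \<beta> \<Delta> \<gamma> x \<and> \<not> is_trivial \<alpha> \<beta> \<Delta> \<gamma> x"
  then obtain x where "is_cocycle \<alpha> \<beta> \<Delta> \<gamma> x" and "\<not> is_trivial \<alpha> \<beta> \<Delta> \<gamma> x" by blast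
  then show "\<alpha> + \<gamma> = 0 \<and> \<beta> = 0 \<and> \<Delta> = 1"
    using nonroot_imp_params cocycle_trivial_iff_root is_cocycle_iff by blast
next
  assume "\<alpha> + \<gamma> = 0 \<and> \<beta> = 0 \<and> \<Delta> = 1"
  then show "\<exists>x. is_cocycle \<alpha> \<beta> \<Delta> \<gamma> x \<and> \<not> is_trivial \<alpha> \<beta> \<Delta> \<gamma> x"
    using std_data_cocycle[of \<alpha> \<gamma> 1] std_data_nontrivial[of 1] by auto
qed

lemma Ext_dim_one_std_data: "Ext_dim_one \<alpha> 0 1 (- \<alpha>)"
  unfolding Ext_dim_one_def
proof (intro exI[of _ "std_data 1"] conjI allI impI)
  show "is_cocycle \<alpha> 0 1 (- \<alpha>) (std_data 1)"
    by (rule std_data_cocycle) simp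
  show "\<not> is_coboundary \<alpha> 0 1 (- \<alpha>) (std_data 1)"
    using std_data_nontrivial[of 1] by (simp add: is_coboundary_def)
  fix x assume "is_cocycle \<alpha> 0 1 (- \<alpha>) x"
  then show "\<exists>c. is_coboundary \<alpha> 0 1 (- \<alpha>) (data_sub x (data_smult c (std_data 1)))"
    using cocycle_diff_std_data_coboundary by (auto simp: data_smult_std_data)
qed

theorem theorem5p4:
  fixes \<alpha> \<beta> \<gamma> \<Delta> :: complex
  assumes "(\<Delta>, \<beta>) \<noteq> (0, 0)"
  shows "((\<exists>x. is_cocycle \<alpha> \<beta> \<Delta> \<gamma> x \<and> \<not> is_trivial \<alpha> \<beta> \<Delta> \<gamma> x)
           \<longleftrightarrow> (\<alpha> + \<gamma> = 0 \<and> \<beta> = 0 \<and> \<Delta> = 1)) \<and>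
         (\<alpha> + \<gamma> = 0 \<and> \<beta> = 0 \<and> \<Delta> = 1 \<longrightarrow>
           Ext_dim_one \<alpha> 0 1 (- \<alpha>) \<and>
           (\<forall>a0. a0 \<noteq> 0 \<longrightarrow> is_cocycle \<alpha> 0 1 (- \<alpha>) (std_data a0)
                               \<and> \<not> is_trivial \<alpha> 0 1 (- \<alpha>) (std_data a0)) \<and>
           (\<forall>x. is_cocycle \<alpha> 0 1 (- \<alpha>) x \<and> \<not> is_trivial \<alpha> 0 1 (- \<alpha>) x \<longrightarrow>
                (\<exists>a0. a0 \<noteq> 0 \<and> is_coboundary \<alpha> 0 1 (- \<alpha>) (data_sub x (std_data a0)))))"
proof (intro conjI impI)
  show "(\<exists>x. is_cocycle \<alpha> \<beta> \<Delta> \<gamma> x \<and> \<not> is_trivial \<alpha> \<beta> \<Delta> \<gamma> x) \<longleftrightarrow> (\<alpha> + \<gamma> = 0 \<and> \<beta> = 0 \<and> \<Delta> = 1)"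
    by (rule nontrivial_cocycle_exists_iff)
  show "Ext_dim_one \<alpha> 0 1 (- \<alpha>)"
    by (rule Ext_dim_one_std_data)
  show "\<forall>a0. a0 \<noteq> 0 \<longrightarrow> is_cocycle \<alpha> 0 1 (- \<alpha>) (std_data a0) \<and> \<not> is_trivial \<alpha> 0 1 (- \<alpha>) (std_data a0)"
    using std_data_cocycle[of \<alpha> "- \<alpha>"] std_data_nontrivial by simp
  show "\<forall>x. is_cocycle \<alpha> 0 1 (- \<alpha>) x \<and> \<not> is_trivial \<alpha> 0 1 (- \<alpha>) x \<longrightarrow>
      (\<exists>a0. a0 \<noteq> 0 \<and> is_coboundary \<alpha> 0 1 (- \<alpha>) (data_sub x (std_data a0)))"
    using cocycle_trivial_iff_root cocycle_diff_std_data_coboundary by blast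
qed

end
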